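(* Define polynomials $K_n(\lambda)$, $n\ge0$, by $K_0=2$, $K_1=1$, $K_2=\lambda-2$, $K_3=\lambda-3$, and for $p\ge2$, $K_{2p+1}=(\lambda-2)K_{2p-1}-K_{2p-3}$ and $K_{2p}=(\lambda-2)K_{2p-2}-K_{2p-4}$. Then for $n\ge3$, $K_n$ has degree $\lfloor n/2\rfloor$ and $$\mathcal{K}_n(\lambda)=\lambda^{\lfloor (n+1)/2\rfloor}K_n(\lambda).$$
   Context: $\mathcal{K}_n(\lambda)=\det(\lambda I_n-M_n)$ where $M_n$ is the $n\times n$ matrix with $(M_n)_{j,i}=1$ if $i\ge j-1$ or $(j,i)=(n,n-2)$, and $0$ otherwise. *)

theory Defs
  imports "Jordan_Normal_Form.Char_Poly"
begin

text \<open>The matrix M_n, with 0-based indices: entry (j,i) is 1 iff i+1 \<ge> j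
  (i.e. 1-based i \<ge> j-1) or (j,i) = (n-1,n-3) (i.e. 1-based (n,n-2)).\<close>
definition Mmat :: "nat \<Rightarrow> int mat" where
  "Mmat n = mat n n (\<lambda>(j,i). if j \<le> i + 1 \<or> (j = n - 1 \<and> i + 3 = n) then 1 else 0)"

text \<open>The polynomials K_n; for n \<ge> 4, K_n = (\<lambda>-2) K_(n-2) - K_(n-4),
  which covers both recurrences for p \<ge> 2.\<close>
fun Kpoly :: "nat \<Rightarrow> int poly" where
  "Kpoly 0 = [:2:]"
| "Kpoly (Suc 0) = [:1:]"
| "Kpoly (Suc (Suc 0)) = [:-2, 1:]"
| "Kpoly (Suc (Suc (Suc 0))) = [:-3, 1:]"
| "Kpoly (Suc (Suc (Suc (Suc n)))) = [:-2, 1:] * Kpoly (Suc (Suc n)) - Kpoly n"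

end

theory Submission
  imports Defs
begin

text \<open>Subtracting from each row of \<open>\<lambda>I - M_n\<close> the next one and then adding column n-1 to
  column n leaves row n-1 with the single entry \<open>\<lambda>\<close>. Expanding along it gives \<open>\<lambda>\<close> times a
  tridiagonal determinant with diagonal \<open>\<lambda>, ..., \<lambda>, \<lambda>-2\<close>, superdiagonal \<open>-\<lambda>\<close> and
  subdiagonal -1. Writing D_k for the k\<times>k such determinant with constant diagonal \<open>\<lambda>\<close>, one has
  \<open>D_(k+2) = \<lambda> D_(k+1) - \<lambda> D_k\<close> and \<open>\<K>_(m+3) = \<lambda> ((\<lambda>-2) D_(m+1) - \<lambda> D_m)\<close>.
  This sequence and \<open>\<lambda>^\<lfloor>(m+4)/2\<rfloor> K_(m+3)\<close> both satisfy
  \<open>f_(m+4) = \<lambda>(\<lambda>-2) f_(m+2) - \<lambda>\<^sup>2 f_m\<close>, and they agree for m < 4.\<close>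

lemma det_expand_row_single_entry:
  fixes A :: "'a::comm_ring_1 mat"
  assumes A: "A \<in> carrier_mat n n" and i: "i < n" and j: "j < n"
    and zero: "\<And>l. l < n \<Longrightarrow> l \<noteq> j \<Longrightarrow> A $$ (i, l) = 0"
  shows "det A = A $$ (i, j) * cofactor A i j"
proof -
  have "det A = (\<Sum>l<n. A $$ (i, l) * cofactor A i l)"
    by (rule laplace_expansion_row[OF A i])
  also have "\<dots> = (\<Sum>l<n. if l = j then A $$ (i, j) * cofactor A i j else 0)"
    by (rule sum.cong) (auto simp: zero)
  finally show ?thesis using j by simp
qed

lemma det_expand_col_single_entry:
  fixes A :: "'a::comm_ring_1 mat"
  assumes A: "A \<in> carrier_mat n n" and i: "i < n" and j: "j < n"
    and zero: "\<And>l. l < n \<Longrightarrow> l \<noteq> i \<Longrightarrow> A $$ (l, j) = 0"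
  shows "det A = A $$ (i, j) * cofactor A i j"
proof -
  have "det A = (\<Sum>l<n. A $$ (l, j) * cofactor A l j)"
    by (rule laplace_expansion_column[OF A j])
  also have "\<dots> = (\<Sum>l<n. if l = i then A $$ (i, j) * cofactor A i j else 0)"
    by (rule sum.cong) (auto simp: zero)
  finally show ?thesis using i by simp
qed

definition tridiag_mat :: "nat \<Rightarrow> (nat \<Rightarrow> 'a) \<Rightarrow> 'a \<Rightarrow> 'a \<Rightarrow> 'a::zero mat" where
  "tridiag_mat k a b c = mat k k (\<lambda>(i, j).
     if i = j then a i else if j = Suc i then b else if i = Suc j then c else 0)"

lemma tridiag_mat_carrier [simp]: "tridiag_mat k a b c \<in> carrier_mat k k"
  by (simp add: tridiag_mat_def)

lemma tridiag_mat_cong: "(\<And>i. i < k \<Longrightarrow> a i = a' i) \<Longrightarrow> tridiag_mat k a b c = tridiag_mat k a' b c"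
  by (rule eq_matI) (auto simp: tridiag_mat_def)

lemma det_tridiag_mat_1: "det (tridiag_mat 1 a b c) = (a 0 :: 'a::comm_ring_1)"
  by (subst det_expand_row_single_entry[of _ 1 0 0])
    (auto simp: tridiag_mat_def cofactor_def mat_delete_def)

lemma det_tridiag_mat_Suc_Suc:
  fixes a :: "nat \<Rightarrow> 'a::comm_ring_1"
  shows "det (tridiag_mat (Suc (Suc k)) a b c) =
    a (Suc k) * det (tridiag_mat (Suc k) a b c) - b * c * det (tridiag_mat k a b c)"
proof -
  let ?T = "tridiag_mat (Suc (Suc k)) a b c"
  define N where "N = mat_delete ?T (Suc k) k"
  have "det ?T = (\<Sum>j<Suc (Suc k). ?T $$ (Suc k, j) * cofactor ?T (Suc k) j)"
    by (rule laplace_expansion_row) auto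
  moreover have "(\<Sum>j<k. ?T $$ (Suc k, j) * cofactor ?T (Suc k) j) = 0"
    by (rule sum.neutral) (auto simp: tridiag_mat_def)
  ultimately have expand: "det ?T = c * cofactor ?T (Suc k) k + a (Suc k) * cofactor ?T (Suc k) (Suc k)"
    by (simp add: tridiag_mat_def)
  have del_diag: "mat_delete ?T (Suc k) (Suc k) = tridiag_mat (Suc k) a b c"
    by (rule eq_matI) (auto simp: mat_delete_def tridiag_mat_def)
  have "det N = N $$ (k, k) * cofactor N k k"
    by (rule det_expand_col_single_entry[of _ "Suc k"])
      (auto simp: N_def mat_delete_def tridiag_mat_def)
  moreover have "mat_delete N k k = tridiag_mat k a b c"
    by (rule eq_matI) (auto simp: N_def mat_delete_def tridiag_mat_def)
  ultimately have "det N = b * det (tridiag_mat k a b c)"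
    by (simp add: N_def mat_delete_def tridiag_mat_def cofactor_def)
  with expand del_diag show ?thesis
    by (simp add: cofactor_def N_def[symmetric] algebra_simps)
qed

definition row_diff_mat :: "nat \<Rightarrow> 'a::comm_ring_1 mat" where
  "row_diff_mat n = mat n n (\<lambda>(i, j). if j = i then 1 else if j = Suc i then -1 else 0)"

lemma row_diff_mat_carrier [simp]:
  "row_diff_mat n \<in> carrier_mat n n" "dim_row (row_diff_mat n) = n" "dim_col (row_diff_mat n) = n"
  by (simp_all add: row_diff_mat_def)

lemma det_row_diff_mat [simp]: "det (row_diff_mat n :: 'a::comm_ring_1 mat) = 1"
proof -
  have "det (row_diff_mat n :: 'a mat) = prod_list (diag_mat (row_diff_mat n :: 'a mat))"
    by (rule det_upper_triangular[of _ n]) (auto simp: upper_triangular_def row_diff_mat_def)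
  also have "diag_mat (row_diff_mat n :: 'a mat) = replicate n 1"
    by (rule nth_equalityI) (auto simp: diag_mat_def row_diff_mat_def)
  finally show ?thesis by simp
qed

lemma row_diff_mat_mult_index:
  assumes A: "A \<in> carrier_mat n n" and j: "j < n" and i: "i < n"
  shows "(row_diff_mat n * A) $$ (j, i) = A $$ (j, i) - (if Suc j < n then A $$ (Suc j, i) else 0)"
proof -
  have "(row_diff_mat n * A) $$ (j, i) = (\<Sum>k\<in>{0..<n}. row_diff_mat n $$ (j, k) * A $$ (k, i))"
    using A j i by (simp add: scalar_prod_def)
  also have "\<dots> = (\<Sum>k\<in>{0..<n}. (if k = j then A $$ (j, i) else 0) + (if k = Suc j then - A $$ (Suc j, i) else 0))"
    by (rule sum.cong) (auto simp: row_diff_mat_def j)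
  also have "\<dots> = A $$ (j, i) - (if Suc j < n then A $$ (Suc j, i) else 0)"
    by (simp add: sum.distrib j)
  finally show ?thesis .
qed
lemma char_poly_matrix_Mmat_index:
  assumes "j < n" "i < n"
  shows "char_poly_matrix (Mmat n) $$ (j, i) =
    (if j = i then [:0, 1:] else 0) - (if j \<le> i + 1 \<or> (j = n - 1 \<and> i + 3 = n) then 1 else 0)"
  using assms by (auto simp: char_poly_matrix_def Mmat_def one_pCons)

lemma char_poly_Mmat_tridiag:
  "char_poly (Mmat (Suc (Suc (Suc m)))) = [:0, 1:] *
    det (tridiag_mat (Suc (Suc m)) (\<lambda>i. if i = Suc m then [:0, 1:] - 2 else [:0, 1:]) (- [:0, 1:]) (-1))"
proof -
  define n where "n = Suc (Suc (Suc m))"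
  define X :: "int poly" where "X = [:0, 1:]"
  define A where "A = char_poly_matrix (Mmat n)"
  define LA where "LA = row_diff_mat n * A"
  define B where "B = addcol 1 (n - 1) (n - 2) LA"
  define a where "a j i = (if j = i then X else 0) - (if j \<le> i + 1 \<or> (j = n - 1 \<and> i + 3 = n) then 1 else 0)" for j i
  define l where "l j i = a j i - (if Suc j < n then a (Suc j) i else 0)" for j i
  have A: "A \<in> carrier_mat n n"
    by (simp add: A_def char_poly_matrix_def Mmat_def)
  have LA: "LA \<in> carrier_mat n n"
    unfolding LA_def using A by (rule mult_carrier_mat[OF row_diff_mat_carrier(1)])
  have B: "B \<in> carrier_mat n n"
    using LA by (auto simp: B_def)
  have "det B = det LA"
    unfolding B_def by (rule det_addcol[of _ n]) (use LA in \<open>auto simp: n_def\<close>)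
  also have "\<dots> = char_poly (Mmat n)"
    using det_mult[OF row_diff_mat_carrier(1) A] by (simp add: LA_def char_poly_def A_def)
  finally have det_B: "det B = char_poly (Mmat n)" .
  have A_index: "A $$ (j, i) = a j i" if "j < n" "i < n" for j i
    using that by (simp add: A_def a_def X_def char_poly_matrix_Mmat_index)
  have LA_index: "LA $$ (j, i) = l j i" if "j < n" "i < n" for j i
    using that by (simp add: LA_def row_diff_mat_mult_index[OF A] A_index l_def)
  have B_index: "B $$ (j, i) = l j i + (if i = n - 1 then l j (n - 2) else 0)" if "j < n" "i < n" for j i
    using that LA by (auto simp: B_def LA_index n_def)
  have B_row: "B $$ (Suc m, i) = (if i = Suc m then X else 0)" if "i < n" for i
    using that by (auto simp: B_index l_def a_def n_def)
  have "det B = X * det (mat_delete B (Suc m) (Suc m))"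
    using det_expand_row_single_entry[OF B, of "Suc m" "Suc m"] B_row
    by (simp add: n_def cofactor_def)
  moreover have "mat_delete B (Suc m) (Suc m) =
      tridiag_mat (Suc (Suc m)) (\<lambda>i. if i = Suc m then X - 2 else X) (- X) (-1)"
    by (rule eq_matI) (use B in \<open>auto simp: mat_delete_def B_index tridiag_mat_def l_def a_def n_def algebra_simps\<close>)
  ultimately show ?thesis
    using det_B unfolding X_def n_def by simp
qed

lemma two_step_rec_imp_four_step_rec:
  fixes f :: "nat \<Rightarrow> 'a::comm_ring_1"
  assumes rec: "\<And>k. f (Suc (Suc k)) = x * f (Suc k) - x * f k"
  shows "f (k + 4) = x * (x - 2) * f (k + 2) - x^2 * f k"
proof -
  have "x * f (Suc k) = f (k + 2) + x * f k"
    using rec[of k] by simp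
  then show ?thesis
    by (simp add: rec eval_nat_numeral algebra_simps power2_eq_square)
qed

lemma four_step_rec_unique:
  fixes f g :: "nat \<Rightarrow> 'a::comm_ring_1"
  assumes "\<And>k. f (k + 4) = a * f (k + 2) - b * f k"
    and "\<And>k. g (k + 4) = a * g (k + 2) - b * g k"
    and "\<And>k. k < 4 \<Longrightarrow> f k = g k"
  shows "f n = g n"
proof (induction n rule: less_induct)
  case (less n)
  show ?case
  proof (cases "n < 4")
    case False
    then obtain k where "n = k + 4" by (metis add.commute le_Suc_ex not_less)
    with less assms(1,2) show ?thesis by simp
  qed (use assms(3) in simp)
qed

lemma D_K_recurrence_identity:
  fixes x :: "'a::comm_ring_1" and d K :: "nat \<Rightarrow> 'a"
  assumes d0: "d 0 = 1" and d1: "d (Suc 0) = x"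
    and d_rec: "\<And>k. d (Suc (Suc k)) = x * d (Suc k) - x * d k"
    and K_low: "K 0 = 2" "K (Suc 0) = 1" "K (Suc (Suc 0)) = x - 2" "K (Suc (Suc (Suc 0))) = x - 3"
    and K_rec: "\<And>k. K (Suc (Suc (Suc (Suc k)))) = (x - 2) * K (Suc (Suc k)) - K k"
  shows "x * ((x - 2) * d (m + 1) - x * d m) = x ^ ((m + 4) div 2) * K (m + 3)"
proof -
  define c where "c m = x * ((x - 2) * d (m + 1) - x * d m)" for m
  have c_rec: "c (Suc (Suc k)) = x * c (Suc k) - x * c k" for k
    unfolding c_def by (simp add: d_rec algebra_simps)
  have "c m = x ^ ((m + 4) div 2) * K (m + 3)"
  proof (rule four_step_rec_unique[where f = c and g = "\<lambda>m. x ^ ((m + 4) div 2) * K (m + 3)"])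
    show "c (k + 4) = x * (x - 2) * c (k + 2) - x^2 * c k" for k
      by (rule two_step_rec_imp_four_step_rec[where f = c, OF c_rec])
  next
    fix k :: nat
    have "(k + 4 + 4) div 2 = (k + 4) div 2 + 2" "(k + 2 + 4) div 2 = (k + 4) div 2 + 1"
      by simp_all
    moreover have "K (k + 4 + 3) = (x - 2) * K (k + 2 + 3) - K (k + 3)"
      using K_rec[of "k + 3"] by (simp add: eval_nat_numeral)
    ultimately show "x ^ ((k + 4 + 4) div 2) * K (k + 4 + 3) =
      x * (x - 2) * (x ^ ((k + 2 + 4) div 2) * K (k + 2 + 3)) - x^2 * (x ^ ((k + 4) div 2) * K (k + 3))"
      by (simp only:) (simp add: algebra_simps power_add power2_eq_square)
  next
    fix k :: nat assume "k < 4"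
    then consider "k = 0" | "k = 1" | "k = 2" | "k = 3" by linarith
    then show "c k = x ^ ((k + 4) div 2) * K (k + 3)"
      unfolding c_def
      by cases (simp_all, simp_all add: d0 d1 d_rec K_low K_rec eval_nat_numeral algebra_simps)
  qed
  then show ?thesis unfolding c_def .
qed

lemma degree_Kpoly: "degree (Kpoly n) = n div 2"
proof (induction n rule: Kpoly.induct)
  case (5 n)
  have "Kpoly (Suc (Suc n)) \<noteq> 0" using 5(1) by (intro notI) simp
  then have "degree ([:-2, 1:] * Kpoly (Suc (Suc n))) = degree [:-2, 1::int:] + degree (Kpoly (Suc (Suc n)))"
    by (intro degree_mult_eq) auto
  then have lead: "degree ([:-2, 1:] * Kpoly (Suc (Suc n))) = Suc (Suc (Suc n) div 2)"
    by (simp add: 5(1))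
  then have "degree ([:-2, 1:] * Kpoly (Suc (Suc n)) - Kpoly n) = Suc (Suc (Suc n) div 2)"
    unfolding diff_conv_add_uminus by (subst degree_add_eq_left) (simp_all add: 5(2))
  then show ?case by simp
qed (auto simp: numeral_poly)

lemma char_poly_Mmat:
  "char_poly (Mmat (m + 3)) = [:0, 1:] ^ ((m + 4) div 2) * Kpoly (m + 3)"
proof -
  define d where "d k = det (tridiag_mat k (\<lambda>_. [:0, 1::int:]) (- [:0, 1:]) (-1))" for k
  have d_rec: "d (Suc (Suc k)) = [:0, 1:] * d (Suc k) - [:0, 1:] * d k" for k
    by (simp add: d_def det_tridiag_mat_Suc_Suc)
  have "char_poly (Mmat (m + 3)) = [:0, 1:] * (([:0, 1:] - 2) * d (m + 1) - [:0, 1:] * d m)"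
  proof -
    let ?a = "\<lambda>i. if i = Suc m then [:0, 1:] - 2 else [:0, 1::int:]"
    have a_cong: "k \<le> Suc m \<Longrightarrow>
        tridiag_mat k ?a (- [:0, 1:]) (-1) = tridiag_mat k (\<lambda>_. [:0, 1:]) (- [:0, 1:]) (-1)" for k
      by (rule tridiag_mat_cong) simp
    have "m + 3 = Suc (Suc (Suc m))" by simp
    then show ?thesis
      by (simp only: char_poly_Mmat_tridiag det_tridiag_mat_Suc_Suc a_cong le_refl le_SucI)
        (simp add: d_def)
  qed
  also have "\<dots> = [:0, 1:] ^ ((m + 4) div 2) * Kpoly (m + 3)"
    by (rule D_K_recurrence_identity[where d = d, OF _ _ d_rec])
      (simp_all add: d_def det_tridiag_mat_1[unfolded One_nat_def] numeral_poly)
  finally show ?thesis .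
qed

theorem proposition4:
  fixes n :: nat
  assumes "n \<ge> 3"
  shows "degree (Kpoly n) = n div 2 \<and>
         char_poly (Mmat n) = monom 1 ((n + 1) div 2) * Kpoly n"
proof
  show "degree (Kpoly n) = n div 2" by (rule degree_Kpoly)
  obtain m where n: "n = m + 3" using assms le_Suc_ex by (metis add.commute)
  then have "(n + 1) div 2 = (m + 4) div 2" by simp
  with n show "char_poly (Mmat n) = monom 1 ((n + 1) div 2) * Kpoly n"
    by (simp only: char_poly_Mmat monom_altdef smult_1_left)
qed

end
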